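(* Let $H$ be a simple undirected graph on vertex set $[n]$, let $\{u_i\}_{i=1}^n$ and $\{w_j\}_{j=1}^n$ be two orthonormal families in $\mathbb{C}^d$, and let $\rho\in\mathcal{F}_H$ be a bipartite state that is PPT. Let $\{e_i\}$ be the standard basis of $\mathbb{C}^n$. Then: (1) with $K=\sum_{i=1}^n |e_i\rangle\langle u_i\otimes w_i|$, we have $Z_K(\rho)=K\rho K^*\in\mathcal{M}_n^+(H)$; (2) with $K=\sum_{i=1}^n |e_i\rangle\langle u_i\otimes \overline{w_i}|$, we have $Z^\Gamma_K(\rho)=K\rho^\Gamma K^*\in\mathcal{M}_n^+(H)$.
   Context: $\rho^\Gamma$ denotes the partial transpose on the second factor (in the standard basis), and $\overline{w}$ is entrywise complex conjugation; $\rho$ is PPT if $\rho\ge0$ and $\rho^\Gamma\ge 0$. For an $n\times n$ matrix $X$, $G(X)$ is the undirected graph on $[n]$ with edge set $\{\{i,j\}: i\ne j,\ X_{ij}X_{ji}\neq 0\}$ (for nonnegative matrices: both entries positive). $\mathcal{M}_n(H)$ is the set of self-adjoint $n\times n$ matrices $X$ with $G(X)\subseteq H$, and $\mathcal{M}_n^+(H)=\mathcal{M}_n^+\cap\mathcal{M}_n(H)$. Given the families $\{u_i\},\{w_j\}$, for a bipartite PSD $\rho$ define the $n\times n$ nonnegative matrix $D(\rho)_{ij}=\langle u_i\otimes w_j|\rho|u_i\otimes w_j\rangle$, and let $\mathcal{F}_H=\{\rho\in(\mathcal{M}_d\otimes\mathcal{M}_d)^+ : G(D(\rho))\subseteq H\}$.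 *)

theory Defs
  imports "HOL-Analysis.Analysis" "HOL-Library.Complex_Order"
begin

text \<open>Complex matrices with finite index types. The n x n matrices are indexed by 'n
  (so [n] = UNIV :: 'n set), vectors of C^d by 'd, and C^d (x) C^d by 'd::finite \<times> 'd
  (standard product basis).\<close>

definition cinner :: "complex^'a \<Rightarrow> complex^'a \<Rightarrow> complex" where
  "cinner x y = (\<Sum>a\<in>UNIV. cnj (x$a) * y$a)"

definition adj :: "complex^'m^'n \<Rightarrow> complex^'n^'m" where
  "adj A = (\<chi> i j. cnj (A$j$i))"

definition ctrace :: "complex^'n^'n \<Rightarrow> complex" where
  "ctrace A = (\<Sum>i\<in>UNIV. A$i$i)"

definition psd :: "complex^'n^'n \<Rightarrow> bool" where
  "psd A \<longleftrightarrow> adj A = A \<and> (\<forall>x. 0 \<le> cinner x (A *v x))"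

definition simple_graph :: "('n \<Rightarrow> 'n \<Rightarrow> bool) \<Rightarrow> bool" where
  "simple_graph H \<longleftrightarrow> (\<forall>i j. H i j \<longrightarrow> H j i) \<and> (\<forall>i. \<not> H i i)"

definition graph_sub :: "complex^'n^'n \<Rightarrow> ('n \<Rightarrow> 'n \<Rightarrow> bool) \<Rightarrow> bool" where
  "graph_sub X H \<longleftrightarrow> (\<forall>i j. i \<noteq> j \<and> X$i$j * X$j$i \<noteq> 0 \<longrightarrow> H i j)"

definition Mplus :: "('n \<Rightarrow> 'n \<Rightarrow> bool) \<Rightarrow> (complex^'n^'n) set" where
  "Mplus H = {X. psd X \<and> graph_sub X H}"

definition tensor :: "complex^'d \<Rightarrow> complex^'d \<Rightarrow> complex^('d::finite \<times> 'd)" where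
  "tensor u w = (\<chi> p. u$(fst p) * w$(snd p))"

definition cvec_cnj :: "complex^'d \<Rightarrow> complex^'d" where
  "cvec_cnj w = (\<chi> a. cnj (w$a))"

definition ptrans :: "complex^('d::finite \<times> 'd)^('d \<times> 'd) \<Rightarrow> complex^('d::finite \<times> 'd)^('d \<times> 'd)" where
  "ptrans \<rho> = (\<chi> p q. \<rho>$(fst p, snd q)$(fst q, snd p))"

definition PPT :: "complex^('d::finite \<times> 'd)^('d \<times> 'd) \<Rightarrow> bool" where
  "PPT \<rho> \<longleftrightarrow> psd \<rho> \<and> psd (ptrans \<rho>)"

definition orthonormal_family :: "('n \<Rightarrow> complex^'d) \<Rightarrow> bool" where
  "orthonormal_family u \<longleftrightarrow> (\<forall>i j. cinner (u i) (u j) = (if i = j then 1 else 0))"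

definition Dmat :: "('n \<Rightarrow> complex^'d) \<Rightarrow> ('n \<Rightarrow> complex^'d) \<Rightarrow> complex^('d::finite \<times> 'd)^('d \<times> 'd) \<Rightarrow> complex^'n^'n" where
  "Dmat u w \<rho> = (\<chi> i j. cinner (tensor (u i) (w j)) (\<rho> *v tensor (u i) (w j)))"

definition FH :: "('n::finite \<Rightarrow> 'n \<Rightarrow> bool) \<Rightarrow> ('n \<Rightarrow> complex^'d) \<Rightarrow> ('n \<Rightarrow> complex^'d) \<Rightarrow> (complex^('d::finite \<times> 'd)^('d \<times> 'd)) set" where
  "FH H u w = {\<rho>. psd \<rho> \<and> graph_sub (Dmat u w \<rho>) H}"

text \<open>K = \<Sum>_i |e_i><v_i| : rows are the bras <v_i|.\<close>
definition Kop :: "('n \<Rightarrow> complex^'a) \<Rightarrow> complex^'a^'n" where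
  "Kop v = (\<chi> i a. cnj (v i $ a))"

end

theory Submission
  imports Defs
begin

text \<open>The (i,j) entry of \<open>K \<rho> K\<^sup>*\<close> is \<open>\<langle>u\<^sub>i \<otimes> w\<^sub>i|\<rho>|u\<^sub>j \<otimes> w\<^sub>j\<rangle>\<close>, and
  moving the second tensor factors across the partial transpose rewrites it as the
  off-diagonal entry \<open>\<langle>u\<^sub>i \<otimes> w\<^sub>j'|\<rho>\<^sup>\<Gamma>|u\<^sub>j \<otimes> w\<^sub>i'\<rangle>\<close> (with \<open>w' = cvec_cnj w\<close>)
  of the positive matrix \<open>\<rho>\<^sup>\<Gamma>\<close>, whose two corresponding diagonal entries are
  \<open>D(\<rho>)\<^sub>i\<^sub>j\<close> and \<open>D(\<rho>)\<^sub>j\<^sub>i\<close>. In a positive semidefinite matrix a nonzero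
  off-diagonal entry forces both diagonal entries to be nonzero, so every edge of
  \<open>G(K \<rho> K\<^sup>*)\<close> is an edge of \<open>G(D(\<rho>)) \<subseteq> H\<close>; positivity of \<open>K \<rho> K\<^sup>*\<close> is just
  congruence. The second claim is the same argument with \<open>\<rho>\<close> and \<open>\<rho>\<^sup>\<Gamma>\<close> exchanged.\<close>

lemma cinner_add_left: "cinner (x + y) z = cinner x z + cinner y z"
  by (simp add: cinner_def algebra_simps sum.distrib)

lemma cinner_add_right: "cinner z (x + y) = cinner z x + cinner z y"
  by (simp add: cinner_def algebra_simps sum.distrib)

lemma cinner_scale_left: "cinner (c *s x) y = cnj c * cinner x y"
  by (simp add: cinner_def algebra_simps sum_distrib_left)

lemma cinner_scale_right: "cinner x (c *s y) = c * cinner x y"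
  by (simp add: cinner_def algebra_simps sum_distrib_left)

lemma matrix_vector_mult_scale: "A *v (c *s x) = c *s (A *v (x::complex^'a))"
  by (simp add: vec_eq_iff matrix_vector_mult_def sum_distrib_left algebra_simps)

lemma cinner_matrix_adj: "cinner x (M *v y) = cinner (adj M *v x) y"
proof -
  have "cinner x (M *v y) = (\<Sum>a\<in>UNIV. \<Sum>b\<in>UNIV. cnj (x$a) * M$a$b * y$b)"
    by (simp add: cinner_def matrix_vector_mult_def sum_distrib_left mult.assoc)
  also have "\<dots> = (\<Sum>b\<in>UNIV. (\<Sum>a\<in>UNIV. cnj (x$a) * M$a$b) * y$b)"
    by (subst sum.swap) (simp add: sum_distrib_right)
  also have "\<dots> = cinner (adj M *v x) y"
    by (simp add: cinner_def matrix_vector_mult_def adj_def mult.commute)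
  finally show ?thesis .
qed

lemma cnj_cinner_hermitian:
  assumes "adj A = A"
  shows "cnj (cinner x (A *v y)) = cinner y (A *v x)"
proof -
  have "cnj (cinner x (A *v y)) = cnj (cinner (A *v x) y)"
    using cinner_matrix_adj[of x A y] assms by simp
  also have "\<dots> = cinner y (A *v x)"
    by (simp add: cinner_def mult.commute)
  finally show ?thesis .
qed

lemma cinner_quadratic_add_scale:
  "cinner (x + c *s y) (A *v (x + c *s y))
     = cinner x (A *v x) + c * cinner x (A *v y) + cnj c * cinner y (A *v x)
       + cnj c * c * cinner y (A *v y)"
  by (simp add: matrix_vector_right_distrib matrix_vector_mult_scale cinner_add_left
      cinner_add_right cinner_scale_left cinner_scale_right algebra_simps)

text \<open>Along \<open>x + c y\<close> with \<open>c = - t \<langle>x|A|y\<rangle>\<^sup>*\<close> the form is \<open>\<langle>x|A|x\<rangle> - 2 t |\<langle>x|A|y\<rangle>|\<^sup>2\<close>,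
  which is negative for large real \<open>t\<close> unless \<open>\<langle>x|A|y\<rangle> = 0\<close>.\<close>
lemma psd_cinner_eq_0_right:
  assumes "psd A" and "cinner y (A *v y) = 0"
  shows "cinner x (A *v y) = 0"
proof (rule ccontr)
  define z where "z = cinner x (A *v y)"
  assume "cinner x (A *v y) \<noteq> 0"
  then have z_pos: "cmod z > 0" by (simp add: z_def)
  from assms(1) have herm: "adj A = A" and nonneg: "\<And>v. 0 \<le> cinner v (A *v v)"
    by (auto simp: psd_def)
  define t where "t = (Re (cinner x (A *v x)) + 1) / (2 * (cmod z)\<^sup>2)"
  define c where "c = - complex_of_real t * cnj z"
  have zz: "z * cnj z = complex_of_real ((cmod z)\<^sup>2)"
    by (rule complex_norm_square[symmetric])
  have "cinner (x + c *s y) (A *v (x + c *s y)) = cinner x (A *v x) + (c * z + cnj c * cnj z)"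
    using assms(2) cnj_cinner_hermitian[OF herm, of x y]
    by (simp add: cinner_quadratic_add_scale z_def)
  also have "c * z + cnj c * cnj z = - 2 * complex_of_real t * (z * cnj z)"
    by (simp add: c_def algebra_simps)
  also have "\<dots> = - complex_of_real (Re (cinner x (A *v x)) + 1)"
    using z_pos by (simp add: zz t_def)
  finally have "Re (cinner (x + c *s y) (A *v (x + c *s y))) = -1"
    by simp
  then show False
    using nonneg[of "x + c *s y"] by (simp add: less_eq_complex_def)
qed

lemma psd_cinner_eq_0_left:
  assumes "psd A" and "cinner x (A *v x) = 0"
  shows "cinner x (A *v y) = 0"
proof -
  have "cinner y (A *v x) = 0"
    by (rule psd_cinner_eq_0_right[OF assms])
  then show ?thesis
    using assms(1) cnj_cinner_hermitian[of A y x] by (simp add: psd_def)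
qed

lemma psd_offdiag_nonzero_imp_diag_nonzero:
  assumes "psd A" and "cinner x (A *v y) \<noteq> 0"
  shows "cinner x (A *v x) \<noteq> 0" and "cinner y (A *v y) \<noteq> 0"
  using assms psd_cinner_eq_0_left psd_cinner_eq_0_right by blast+

lemma Kop_congruence_entry: "(Kop v ** A ** adj (Kop v))$i$j = cinner (v i) (A *v v j)"
proof -
  have "(Kop v ** A ** adj (Kop v))$i$j = (\<Sum>k\<in>UNIV. \<Sum>a\<in>UNIV. cnj (v i $ a) * A$a$k * v j $ k)"
    by (simp add: matrix_matrix_mult_def Kop_def adj_def sum_distrib_right)
  also have "\<dots> = cinner (v i) (A *v v j)"
    by (subst sum.swap) (simp add: cinner_def matrix_vector_mult_def sum_distrib_left mult.assoc)
  finally show ?thesis .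
qed

lemma psd_congruence:
  assumes "psd A"
  shows "psd (K ** A ** adj K)"
proof -
  from assms have herm: "adj A = A" and nonneg: "\<And>v. 0 \<le> cinner v (A *v v)"
    by (auto simp: psd_def)
  have K_eq: "K = Kop (\<lambda>i. \<chi> a. cnj (K$i$a))"
    by (simp add: Kop_def vec_eq_iff)
  have "adj (K ** A ** adj K) $ i $ j = (K ** A ** adj K) $ i $ j" for i j
    using Kop_congruence_entry[of "\<lambda>i. \<chi> a. cnj (K$i$a)" A] cnj_cinner_hermitian[OF herm]
    by (simp add: K_eq[symmetric] adj_def)
  then have "adj (K ** A ** adj K) = K ** A ** adj K"
    by (simp add: vec_eq_iff)
  moreover have "cinner x ((K ** A ** adj K) *v x) = cinner (adj K *v x) (A *v (adj K *v x))" for x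
    by (simp add: matrix_vector_mul_assoc[symmetric] matrix_mul_assoc cinner_matrix_adj)
  ultimately show ?thesis
    using nonneg by (simp add: psd_def)
qed

lemma cinner_tensor_expand:
  "cinner (tensor a b) (M *v tensor c d)
     = (\<Sum>x\<in>UNIV. \<Sum>x'\<in>UNIV. \<Sum>y\<in>UNIV. \<Sum>y'\<in>UNIV.
          cnj (a$x) * c$x' * (cnj (b$y) * d$y') * M$(x, y)$(x', y'))"
proof -
  have "cinner (tensor a b) (M *v tensor c d)
      = (\<Sum>(x, y)\<in>UNIV. \<Sum>(x', y')\<in>UNIV. cnj (a$x) * c$x' * (cnj (b$y) * d$y') * M$(x, y)$(x', y'))"
    by (simp add: cinner_def matrix_vector_mult_def tensor_def sum_distrib_left split_beta
        mult.commute mult.left_commute)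
  also have "\<dots> = (\<Sum>x\<in>UNIV. \<Sum>y\<in>UNIV. \<Sum>x'\<in>UNIV. \<Sum>y'\<in>UNIV.
          cnj (a$x) * c$x' * (cnj (b$y) * d$y') * M$(x, y)$(x', y'))"
    by (simp add: UNIV_Times_UNIV[symmetric] sum.cartesian_product[symmetric] del: UNIV_Times_UNIV)
  also have "\<dots> = (\<Sum>x\<in>UNIV. \<Sum>x'\<in>UNIV. \<Sum>y\<in>UNIV. \<Sum>y'\<in>UNIV.
          cnj (a$x) * c$x' * (cnj (b$y) * d$y') * M$(x, y)$(x', y'))"
    by (rule sum.cong[OF refl], rule sum.swap)
  finally show ?thesis .
qed

lemma cinner_tensor_ptrans:
  "cinner (tensor a b) (ptrans \<rho> *v tensor c d)
     = cinner (tensor a (cvec_cnj d)) (\<rho> *v tensor c (cvec_cnj b))"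
  unfolding cinner_tensor_expand
  by (subst (3) sum.swap) (simp add: ptrans_def cvec_cnj_def mult.commute)

lemma cvec_cnj_cvec_cnj [simp]: "cvec_cnj (cvec_cnj w) = w"
  by (simp add: cvec_cnj_def vec_eq_iff)

lemma graph_sub_of_psd_matrix_elements:
  assumes "psd A" and "graph_sub D H"
    and X_eq: "\<And>i j. X$i$j = cinner (f i j) (A *v f j i)"
    and D_eq: "\<And>i j. D$i$j = cinner (f i j) (A *v f i j)"
  shows "graph_sub X H"
  unfolding graph_sub_def
proof (intro allI impI)
  fix i j
  assume ij: "i \<noteq> j \<and> X$i$j * X$j$i \<noteq> 0"
  then have "cinner (f i j) (A *v f j i) \<noteq> 0"
    by (simp add: X_eq)
  then have "D$i$j \<noteq> 0" and "D$j$i \<noteq> 0"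
    using psd_offdiag_nonzero_imp_diag_nonzero[OF assms(1)] by (simp_all add: D_eq)
  then show "H i j"
    using ij assms(2) by (simp add: graph_sub_def)
qed

theorem mainTheorem4:
  fixes H :: "'n::finite \<Rightarrow> 'n \<Rightarrow> bool"
    and u w :: "'n \<Rightarrow> complex^'d::finite"
    and \<rho> :: "complex^('d \<times> 'd)^('d \<times> 'd)"
  assumes "simple_graph H"
    and "orthonormal_family u" and "orthonormal_family w"
    and "\<rho> \<in> FH H u w" and "ctrace \<rho> = 1" and "PPT \<rho>"
  shows "(let K = Kop (\<lambda>i. tensor (u i) (w i)) in K ** \<rho> ** adj K) \<in> Mplus H
       \<and> (let K = Kop (\<lambda>i. tensor (u i) (cvec_cnj (w i))) in K ** ptrans \<rho> ** adj K) \<in> Mplus H"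
proof -
  from \<open>PPT \<rho>\<close> have psd_\<rho>: "psd \<rho>" and psd_ptrans: "psd (ptrans \<rho>)"
    by (auto simp: PPT_def)
  from \<open>\<rho> \<in> FH H u w\<close> have D_sub: "graph_sub (Dmat u w \<rho>) H"
    by (simp add: FH_def)
  have "graph_sub (Kop (\<lambda>i. tensor (u i) (w i)) ** \<rho> ** adj (Kop (\<lambda>i. tensor (u i) (w i)))) H"
    by (rule graph_sub_of_psd_matrix_elements[OF psd_ptrans D_sub,
          where f = "\<lambda>i j. tensor (u i) (cvec_cnj (w j))"])
      (simp_all add: Kop_congruence_entry Dmat_def cinner_tensor_ptrans)
  moreover have "graph_sub (Kop (\<lambda>i. tensor (u i) (cvec_cnj (w i))) ** ptrans \<rho>
      ** adj (Kop (\<lambda>i. tensor (u i) (cvec_cnj (w i))))) H"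
    by (rule graph_sub_of_psd_matrix_elements[OF psd_\<rho> D_sub,
          where f = "\<lambda>i j. tensor (u i) (w j)"])
      (simp_all add: Kop_congruence_entry Dmat_def cinner_tensor_ptrans)
  ultimately show ?thesis
    by (simp add: Mplus_def Let_def psd_congruence psd_\<rho> psd_ptrans)
qed

end
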